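(* For integers $n\ge 10$ and $1\le j\le n$ let $$A_j=\Big(\frac{n!}{(n-j)!}\Big)^2\frac{1}{j!}\exp\Big\{-2j\log n\Big(1-\frac jn\Big)-2j\Big\}.$$ Then $\sum_{j=1}^{\lfloor n/4\rfloor}A_j\le 2/3$ and $\sum_{j\in\mathbb Z,\ n/4\le j\le n/2}A_j\le 1/4$.
   Context: $\log$ denotes the natural logarithm. *)

theory Defs
  imports Complex_Main
begin

definition A :: "nat \<Rightarrow> nat \<Rightarrow> real" where
  "A n j = (fact n / fact (n - j)) ^ 2 * (1 / fact j) *
     exp (- 2 * real j * ln (real n) * (1 - real j / real n) - 2 * real j)"

end

theory Submission
  imports Defs "HOL-Analysis.Analysis"
begin

(*
  Write L = ln n.  Two classical factorial estimates,
     n!/(n-j)! \<le> exp (j L - j(j-1)/(2n))   and   j! \<ge> exp (1 + j ln j - j),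
  turn A n j into  exp (j (q j + 1/n - 1) - 1)  with  q x = (2L - 1)/n * x - ln x.
  The function q is convex, so on [1, n/2] it is bounded by its values at the
  endpoints, and both are at most 1/2 - 1/n once n \<ge> 10 (using ln n \<le> n/4 and
  ln 2 \<le> 9/10).  Hence  A n j \<le> exp (-1 - j/2) = r^(j+2)  with r = exp(-1/2),
  for 1 \<le> j \<le> n/2.  Summing this geometric bound over indices \<ge> k gives
  r^(k+2)/(1-r) \<le> (8/13)^(k+2)/(5/13), since r \<le> 8/13.  The first sum has
  indices \<ge> 1 and the second indices \<ge> 3 (as n/4 > 2), which yields 2/3 and 1/4.
*)

text \<open>A quadratic Taylor lower bound for exp(1/2); it controls both ln 10 and
  the ratio r = exp(-1/2) of the final geometric series.\<close>
lemma exp_half_lower: "(13/8::real) \<le> exp (1/2)"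
  using exp_lower_Taylor_quadratic[of "1/2"] by (simp add: power2_eq_square)

lemma ln_2_upper: "ln (2::real) \<le> 9/10"
proof -
  have "(2::real) \<le> exp (9/10)"
    using exp_lower_Taylor_quadratic[of "9/10"] by (simp add: power2_eq_square)
  thus ?thesis by (metis exp_le_cancel_iff exp_ln zero_less_numeral)
qed

text \<open>ln n \<le> n/4 for n \<ge> 10: from ln 10 \<le> 5/2 and ln (n/10) \<le> n/10 - 1.\<close>
lemma ln_le_quarter:
  assumes "n \<ge> (10::nat)"
  shows "ln (real n) \<le> real n / 4"
proof -
  have "(13/8::real) ^ 5 \<le> exp (1/2) ^ 5"
    using exp_half_lower by (intro power_mono) auto
  also have "exp (1/2::real) ^ 5 = exp (5/2)" by (simp flip: exp_of_nat_mult)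
  finally have "(10::real) \<le> exp (5/2)" by (simp add: power_numeral_reduce)
  hence ln_10: "ln 10 \<le> (5/2::real)" by (metis exp_le_cancel_iff exp_ln zero_less_numeral)
  have "ln (real n / 10) \<le> real n / 10 - 1" using assms by (intro ln_le_minus_one) auto
  moreover have "ln (real n / 10) = ln (real n) - ln 10" using assms by (simp add: ln_div)
  ultimately show ?thesis using ln_10 assms by simp
qed

text \<open>Stirling-type lower bound  j! \<ge> e (j/e)^j, by induction using
  j ln (1 + 1/j) \<le> 1.\<close>
lemma fact_lower_exp:
  assumes "j \<ge> 1"
  shows "exp (1 + real j * ln (real j) - real j) \<le> fact j"
proof -
  have "1 + real j * ln (real j) - real j \<le> ln (fact j)"
    using assms
  proof (induction j rule: dec_induct)
    case base
    then show ?case by simp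
  next
    case (step j)
    have jp: "real j > 0" using step by simp
    have "ln (1 + 1 / real j) \<le> 1 / real j" using jp by (intro ln_add_one_self_le_self) auto
    moreover have "1 + 1 / real j = (real j + 1) / real j" using jp by (simp add: field_simps)
    ultimately have "ln (real j + 1) - ln (real j) \<le> 1 / real j" using jp by (simp add: ln_div)
    hence "real j * (ln (real j + 1) - ln (real j)) \<le> 1"
      using jp by (simp add: field_simps)
    moreover have "ln (fact (Suc j) :: real) = ln (real j + 1) + ln (fact j)"
      by (simp add: ln_mult add.commute)
    ultimately show ?case using step.IH by (simp add: algebra_simps)
  qed
  thus ?thesis by (metis exp_le_cancel_iff exp_ln fact_gt_zero)
qed

text \<open>The falling factorial n!/(n-j)! = \<Prod>i<j. (n - i) is at most
  \<Prod>i<j. n exp(-i/n) = exp (j ln n - j(j-1)/(2n)).\<close>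
lemma falling_fact_upper:
  assumes "j \<le> n" "n > 0"
  shows "fact n / fact (n - j) \<le> exp (real j * ln (real n) - real j * (real j - 1) / (2 * real n))"
  using assms(1)
proof (induction j)
  case 0
  then show ?case by simp
next
  case (Suc j)
  have np: "real n > 0" using assms by simp
  have step: "fact n / fact (n - Suc j) = fact n / fact (n - j) * real (n - j)"
  proof -
    have "fact (n - j) = real (n - j) * (fact (n - Suc j) :: real)"
      using Suc.prems by (metis Suc_diff_Suc fact_Suc le_simps(3) of_nat_fact)
    moreover have "real (n - j) > 0" using Suc.prems by simp
    moreover have "a / F = a / (m * F) * m" if "m > 0" "F > 0" for a m F :: real
      using that by (simp add: field_simps)
    ultimately show ?thesis by simp
  qed
  have "real (n - j) = real n * (1 - real j / real n)"
    using Suc.prems np by (simp add: of_nat_diff field_simps)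
  also have "\<dots> \<le> real n * exp (- (real j / real n))"
    using np exp_ge_add_one_self[of "- (real j / real n)"] by (intro mult_left_mono) auto
  also have "\<dots> = exp (ln (real n) - real j / real n)"
    using np by (simp add: exp_diff exp_minus divide_inverse)
  finally have factor: "real (n - j) \<le> exp (ln (real n) - real j / real n)" .
  have "fact n / fact (n - Suc j) \<le>
      exp (real j * ln (real n) - real j * (real j - 1) / (2 * real n)) * exp (ln (real n) - real j / real n)"
    unfolding step using Suc by (intro mult_mono factor) auto
  also have "\<dots> = exp (real (Suc j) * ln (real n) - real (Suc j) * (real (Suc j) - 1) / (2 * real n))"
    unfolding exp_add[symmetric] using np by (simp add: field_simps)
  finally show ?case .
qed

text \<open>The function x \<mapsto> (2 ln n - 1)/n * x - ln x is convex, so on [1, n/2] it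
  is bounded by its endpoint values, both at most 1/2 - 1/n when n \<ge> 10.\<close>
lemma exponent_upper:
  assumes n: "n \<ge> 10" and x: "1 \<le> x" "x \<le> real n / 2"
  shows "(2 * ln (real n) - 1) / real n * x - ln x \<le> 1/2 - 1 / real n"
proof -
  define c where "c = (2 * ln (real n) - 1) / real n"
  define q where "q = (\<lambda>x::real. c * x - ln x)"
  have np: "real n > 0" using n by simp
  have "convex_on {1..real n / 2} q"
  proof -
    have "convex_on {1..real n / 2} (\<lambda>x::real. c * x)"
      by (rule convex_onI) (auto simp: algebra_simps)
    moreover have "concave_on {1..real n / 2} ln"
      using ln_concave by (simp add: concave_on_def) (rule convex_on_subset, auto)
    ultimately show ?thesis unfolding q_def by (rule convex_on_diff)
  qed
  hence "q x \<le> max (q 1) (q (real n / 2))"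
    by (rule convex_on_le_max) (use x in auto)
  moreover have "q 1 \<le> 1/2 - 1 / real n"
    unfolding q_def c_def using ln_le_quarter[OF n] np by (simp add: field_simps)
  moreover have "q (real n / 2) \<le> 1/2 - 1 / real n"
  proof -
    have "q (real n / 2) = ln 2 - 1/2" unfolding q_def c_def using np by (simp add: ln_div field_simps)
    moreover have "1 / real n \<le> 1 - ln 2"
    proof -
      have "real n * ln 2 \<le> real n * (9/10)" using ln_2_upper by (intro mult_left_mono) auto
      hence "1 \<le> real n - real n * ln 2" using n by linarith
      hence "1 \<le> (1 - ln 2) * real n" by (simp add: left_diff_distrib mult.commute[of "ln 2"])
      thus ?thesis using np by (simp add: pos_divide_le_eq)
    qed
    ultimately show ?thesis by simp
  qed
  ultimately show ?thesis unfolding q_def c_def by simp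
qed

lemma A_le_geometric:
  assumes n: "n \<ge> 10" and j: "1 \<le> j" "real j \<le> real n / 2"
  shows "A n j \<le> exp (- 1/2) ^ (j + 2)"
proof -
  define L where "L = ln (real n)"
  define e where "e = (2 * L - 1) / real n * real j - ln (real j)"
  have np: "real n > 0" using n by simp
  have "(fact n / fact (n - j)) ^ 2 \<le> exp (real j * L - real j * (real j - 1) / (2 * real n)) ^ 2"
    unfolding L_def using falling_fact_upper[of j n] j n by (intro power_mono) auto
  also have "\<dots> = exp (2 * real j * L - real j * (real j - 1) / real n)"
    using np by (simp flip: exp_of_nat_mult add: field_simps)
  finally have P: "(fact n / fact (n - j)) ^ 2 \<le> exp (2 * real j * L - real j * (real j - 1) / real n)" .
  have "1 / fact j \<le> 1 / exp (1 + real j * ln (real j) - real j)"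
    using fact_lower_exp[OF j(1)] by (intro divide_left_mono) auto
  hence F: "1 / fact j \<le> exp (- (1 + real j * ln (real j) - real j))"
    by (simp only: exp_minus inverse_eq_divide)
  have "A n j \<le> exp (2 * real j * L - real j * (real j - 1) / real n)
      * exp (- (1 + real j * ln (real j) - real j)) * exp (- 2 * real j * L * (1 - real j / real n) - 2 * real j)"
    unfolding A_def L_def[symmetric] by (intro mult_mono P F) auto
  also have "\<dots> = exp (real j * (e + 1 / real n - 1) - 1)"
    unfolding exp_add[symmetric] e_def using np by (simp add: field_simps)
  also have "\<dots> \<le> exp (real (j + 2) * (- 1/2))"
  proof -
    have "e \<le> 1/2 - 1 / real n" unfolding e_def L_def using exponent_upper n j by simp
    hence "real j * (e + 1 / real n - 1) \<le> real j * (- 1/2)" by (intro mult_left_mono) auto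
    thus ?thesis by (simp add: field_simps)
  qed
  also have "\<dots> = exp (- 1/2) ^ (j + 2)" by (simp only: exp_of_nat_mult)
  finally show ?thesis .
qed

lemma geometric_tail_bound:
  fixes r :: real
  assumes r: "0 \<le> r" "r < 1" and S: "finite S" "S \<subseteq> {k..}"
  shows "(\<Sum>j\<in>S. r ^ j) \<le> r ^ k / (1 - r)"
proof -
  have "inj_on (\<lambda>j. j - k) S" using S by (intro inj_on_diff_nat) auto
  hence "(\<Sum>j\<in>S. r ^ j) = (\<Sum>i\<in>(\<lambda>j. j - k) ` S. r ^ (i + k))"
    using S by (subst sum.reindex) (auto intro!: sum.cong)
  also have "\<dots> \<le> (\<Sum>i. r ^ (i + k))"
    using r S by (intro sum_le_suminf) (auto intro!: summable_mult2 simp: power_add)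
  also have "\<dots> = r ^ k / (1 - r)"
    using r by (simp add: power_add suminf_mult2[symmetric] suminf_geometric divide_simps)
  finally show ?thesis .
qed

lemma A_sum_tail_bound:
  assumes n: "n \<ge> 10" and S: "finite S" "S \<subseteq> {k..}"
    and S_window: "\<And>j. j \<in> S \<Longrightarrow> 1 \<le> j \<and> real j \<le> real n / 2"
  shows "(\<Sum>j\<in>S. A n j) \<le> (8/13) ^ (k + 2) / (5/13)"
proof -
  define r where "r = exp (- 1/2 :: real)"
  have r: "0 \<le> r" "r \<le> 8/13"
    unfolding r_def using exp_half_lower by (auto simp: exp_minus field_simps)
  have "(\<Sum>j\<in>S. A n j) \<le> (\<Sum>j\<in>S. r ^ (j + 2))"
    unfolding r_def using S_window A_le_geometric[OF n] by (intro sum_mono) auto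
  also have "\<dots> = (\<Sum>j\<in>(\<lambda>j. j + 2) ` S. r ^ j)"
    by (subst sum.reindex) (auto simp: inj_on_def)
  also have "\<dots> \<le> r ^ (k + 2) / (1 - r)"
    using S r by (intro geometric_tail_bound) auto
  also have "\<dots> \<le> (8/13) ^ (k + 2) / (5/13)"
    using r by (intro frac_le power_mono) auto
  finally show ?thesis .
qed

theorem lemma4p7:
  fixes n :: nat
  assumes "n \<ge> 10"
  shows "(\<Sum>j = 1..n div 4. A n j) \<le> 2 / 3 \<and>
    (\<Sum>j \<in> {j::nat. real n / 4 \<le> real j \<and> real j \<le> real n / 2}. A n j) \<le> 1 / 4"
proof
  have "(\<Sum>j = 1..n div 4. A n j) \<le> (8/13) ^ (1 + 2) / (5/13)"
    using assms by (intro A_sum_tail_bound) auto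
  also have "\<dots> \<le> 2/3" by (simp add: power_numeral_reduce)
  finally show "(\<Sum>j = 1..n div 4. A n j) \<le> 2 / 3" .
next
  define S where "S = {j::nat. real n / 4 \<le> real j \<and> real j \<le> real n / 2}"
  have S_window: "3 \<le> j \<and> real j \<le> real n / 2" if "j \<in> S" for j
  proof -
    have "real n \<le> 4 * real j" "real j \<le> real n / 2" using that by (auto simp: S_def)
    thus ?thesis using assms by linarith
  qed
  have "finite S" by (rule finite_subset[of _ "{..n}"]) (auto simp: S_def)
  hence "(\<Sum>j\<in>S. A n j) \<le> (8/13) ^ (3 + 2) / (5/13)"
    using assms by (intro A_sum_tail_bound) (auto dest!: S_window)
  also have "\<dots> \<le> 1/4" by (simp add: power_numeral_reduce)
  finally show "(\<Sum>j \<in> {j::nat. real n / 4 \<le> real j \<and> real j \<le> real n / 2}. A n j) \<le> 1 / 4"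
    unfolding S_def .
qed

end
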